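(* Let $\mathbb F$ be a field and $f(x)$ a nonzero polynomial in $\mathbb F[x]$. Then $d(f(x))=|(\mathbb F[x])'/P_{J([f(x)]_\sim)}|$, where $(\mathbb F[x])'=\mathbb F[x]_{mult}/\sim$.
   Context: $\mathbb F[x]_{mult}$ is the multiplicative semigroup of $\mathbb F[x]$; $\sim$ is the associate relation, a congruence on it; $[g]_\sim$ is the $\sim$-class of $g$. $J([f(x)]_\sim)$ is the ideal of the semigroup $(\mathbb F[x])'$ generated by $[f(x)]_\sim$. For a semigroup $S$, $H\subseteq S$, $a\in S$: $H\dots a=\{(u,v)\in S\times S: uav\in H\}$ and $P_H=\{(a,b)\in S\times S: H\dots a=H\dots b\}$. $d(f(x))$ is the number of pairwise non-associated divisors of $f(x)$ in $\mathbb F[x]$. *)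

theory Defs
  imports "HOL-Computational_Algebra.Polynomial"
begin

definition assoc_rel :: "('a::comm_semiring_1) rel" where
  "assoc_rel = {(g, h). g dvd h \<and> h dvd g}"

text \<open>Carrier of (F[x])' = F[x]_mult / ~ : the set of associate classes.\<close>
definition polyQ :: "('a::field poly) set set" where
  "polyQ = UNIV // assoc_rel"

definition qmult :: "('a::field poly) set \<Rightarrow> 'a poly set \<Rightarrow> 'a poly set" where
  "qmult A B = (\<Union>a\<in>A. \<Union>b\<in>B. assoc_rel `` {a * b})"

definition sg_ideal_gen :: "'s set \<Rightarrow> ('s \<Rightarrow> 's \<Rightarrow> 's) \<Rightarrow> 's set \<Rightarrow> 's set" where
  "sg_ideal_gen S m X =
     X \<union> {m s x | s x. s \<in> S \<and> x \<in> X} \<union> {m x t | x t. x \<in> X \<and> t \<in> S}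
       \<union> {m (m s x) t | s x t. s \<in> S \<and> x \<in> X \<and> t \<in> S}"

definition sg_residual :: "'s set \<Rightarrow> ('s \<Rightarrow> 's \<Rightarrow> 's) \<Rightarrow> 's set \<Rightarrow> 's \<Rightarrow> ('s \<times> 's) set" where
  "sg_residual S m H a = {(u, v). u \<in> S \<and> v \<in> S \<and> m (m u a) v \<in> H}"

definition sg_P :: "'s set \<Rightarrow> ('s \<Rightarrow> 's \<Rightarrow> 's) \<Rightarrow> 's set \<Rightarrow> 's rel" where
  "sg_P S m H = {(a, b). a \<in> S \<and> b \<in> S \<and> sg_residual S m H a = sg_residual S m H b}"

definition num_divisors :: "'a::field poly \<Rightarrow> nat" where
  "num_divisors f = card ({g. g dvd f} // assoc_rel)"

end

theory Submission
  imports Defs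
begin

text \<open>The ideal generated by the class of \<open>f\<close> consists of the classes of the multiples of
  \<open>f\<close>, so \<open>[u][a][v]\<close> lies in it iff \<open>f\<close> divides \<open>u a v\<close>. By commutativity the residual
  \<open>H\<dots>[a]\<close> therefore determines and is determined by the colon ideal \<open>{w. f dvd w a}\<close>.
  Since \<open>F[x]\<close> is Euclidean, this ideal is principal, generated by a divisor of \<open>f\<close>
  (it contains \<open>f\<close>), and every divisor \<open>g\<close> of \<open>f\<close> occurs as a generator (take \<open>a = f / g\<close>).
  So the \<open>P\<close>-classes correspond to the principal ideals generated by divisors of \<open>f\<close>, i.e. to
  the associate classes of divisors of \<open>f\<close>.\<close>

lemma card_quotient_eq_card_image:
  assumes "\<And>x. x \<in> A \<Longrightarrow> R `` {x} = {y \<in> A. h y = h x}"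
  shows "card (A // R) = card (h ` A)"
proof -
  have "A // R = (\<lambda>z. {y \<in> A. h y = z}) ` h ` A"
    unfolding quotient_def using assms by auto
  moreover have "inj_on (\<lambda>z. {y \<in> A. h y = z}) (h ` A)"
    by (rule inj_onI) blast
  ultimately show ?thesis
    by (simp add: card_image)
qed

lemma card_image_eq_card_image:
  assumes "\<And>a b. a \<in> A \<Longrightarrow> b \<in> A \<Longrightarrow> F a = F b \<longleftrightarrow> G a = G b"
  shows "card (F ` A) = card (G ` A)"
proof -
  define R where "R = {(a, b). a \<in> A \<and> b \<in> A \<and> F a = F b}"
  have "card (A // R) = card (F ` A)"
    by (rule card_quotient_eq_card_image) (auto simp: R_def)
  moreover have "card (A // R) = card (G ` A)"
    by (rule card_quotient_eq_card_image) (auto simp: R_def assms)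
  ultimately show ?thesis
    by simp
qed

lemma euclidean_ideal_principal:
  fixes I :: "'a::euclidean_ring set"
  assumes "x \<in> I" and "x \<noteq> 0"
    and diff_closed: "\<And>u v. u \<in> I \<Longrightarrow> v \<in> I \<Longrightarrow> u - v \<in> I"
    and mult_closed: "\<And>u c. u \<in> I \<Longrightarrow> c * u \<in> I"
  obtains m where "m \<in> I" and "I = {w. m dvd w}"
proof -
  obtain m where m: "m \<in> I" "m \<noteq> 0"
    and least: "\<And>w. w \<in> I \<Longrightarrow> w \<noteq> 0 \<Longrightarrow> euclidean_size m \<le> euclidean_size w"
    using ex_has_least_nat [of "\<lambda>w. w \<in> I \<and> w \<noteq> 0" x euclidean_size] assms(1,2) by blast
  have "m dvd w" if "w \<in> I" for w
  proof (rule ccontr)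
    assume "\<not> m dvd w"
    then have "w mod m \<noteq> 0"
      by (simp add: mod_eq_0_iff_dvd)
    have "w mod m \<in> I"
      using diff_closed [OF that mult_closed [OF m(1), of "w div m"]]
      by (simp add: minus_div_mult_eq_mod)
    then have "euclidean_size m \<le> euclidean_size (w mod m)"
      using \<open>w mod m \<noteq> 0\<close> by (rule least)
    with mod_size_less [OF m(2), of w] show False
      by simp
  qed
  moreover have "w \<in> I" if "m dvd w" for w
    using that mult_closed [OF m(1)] by (auto elim!: dvdE simp: mult.commute)
  ultimately show thesis
    using that m(1) by blast
qed

lemma colon_ideal_principal:
  fixes f a :: "'a::euclidean_ring"
  assumes "f \<noteq> 0"
  obtains g where "g dvd f" and "{w. f dvd w * a} = {w. g dvd w}"
proof -
  define C where "C = {w. f dvd w * a}"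
  have f_in: "f \<in> C"
    by (simp add: C_def)
  have diff: "u - v \<in> C" if "u \<in> C" and "v \<in> C" for u v
    using that by (simp add: C_def left_diff_distrib dvd_diff)
  have mult: "c * u \<in> C" if "u \<in> C" for u c
    using that by (simp add: C_def mult.assoc)
  obtain g where "C = {w. g dvd w}"
    using euclidean_ideal_principal [OF f_in assms diff mult] .
  moreover from this have "g dvd f"
    using f_in by blast
  ultimately show thesis
    using that unfolding C_def by blast
qed

lemma dvd_mult_div_iff:
  fixes f g w :: "'a::algebraic_semidom"
  assumes "f \<noteq> 0" and "g dvd f"
  shows "f dvd w * (f div g) \<longleftrightarrow> g dvd w"
proof -
  have "f div g \<noteq> 0"
    using assms by (auto elim: dvdE)
  have "f = (f div g) * g"
    using assms(2) by (simp add: dvd_div_mult_self)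
  then have "f dvd w * (f div g) \<longleftrightarrow> (f div g) * g dvd (f div g) * w"
    by (simp add: mult.commute)
  also have "\<dots> \<longleftrightarrow> g dvd w"
    using \<open>f div g \<noteq> 0\<close> by simp
  finally show ?thesis .
qed

lemma colon_ideals_eq_divisor_multiples:
  fixes f :: "'a::euclidean_ring"
  assumes "f \<noteq> 0"
  shows "(\<lambda>a. {w. f dvd w * a}) ` UNIV = (\<lambda>g. {w. g dvd w}) ` {g. g dvd f}"
proof
  show "(\<lambda>a. {w. f dvd w * a}) ` UNIV \<subseteq> (\<lambda>g. {w. g dvd w}) ` {g. g dvd f}"
  proof
    fix A assume "A \<in> (\<lambda>a. {w. f dvd w * a}) ` UNIV"
    then obtain a where A: "A = {w. f dvd w * a}"
      by blast
    obtain g where "g dvd f" and "{w. f dvd w * a} = {w. g dvd w}"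
      using colon_ideal_principal [OF assms, of a] .
    then show "A \<in> (\<lambda>g. {w. g dvd w}) ` {g. g dvd f}"
      unfolding A by (intro rev_image_eqI [of g]) simp_all
  qed
  show "(\<lambda>g. {w. g dvd w}) ` {g. g dvd f} \<subseteq> (\<lambda>a. {w. f dvd w * a}) ` UNIV"
  proof
    fix A assume "A \<in> (\<lambda>g. {w. g dvd w}) ` {g. g dvd f}"
    then obtain g where "g dvd f" and "A = {w. g dvd w}"
      by blast
    then have "A = {w. f dvd w * (f div g)}"
      using assms by (simp add: dvd_mult_div_iff)
    then show "A \<in> (\<lambda>a. {w. f dvd w * a}) ` UNIV"
      by (rule image_eqI) simp
  qed
qed

lemma multiples_eq_iff:
  fixes x y :: "'a::comm_semiring_1"
  shows "{w. x dvd w} = {w. y dvd w} \<longleftrightarrow> x dvd y \<and> y dvd x"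
proof
  assume "{w. x dvd w} = {w. y dvd w}"
  then show "x dvd y \<and> y dvd x"
    by (metis dvd_refl mem_Collect_eq)
qed (blast intro: dvd_trans)

definition assoc_class :: "'a::comm_semiring_1 \<Rightarrow> 'a set" where
  "assoc_class g = assoc_rel `` {g}"

lemma mem_assoc_class: "y \<in> assoc_class x \<longleftrightarrow> x dvd y \<and> y dvd x"
  unfolding assoc_class_def assoc_rel_def by blast

lemma assoc_class_eq_iff: "assoc_class x = assoc_class y \<longleftrightarrow> x dvd y \<and> y dvd x"
proof
  assume "assoc_class x = assoc_class y"
  then have "y \<in> assoc_class x"
    by (simp add: mem_assoc_class)
  then show "x dvd y \<and> y dvd x"
    by (simp add: mem_assoc_class)
qed (unfold set_eq_iff mem_assoc_class, blast intro: dvd_trans)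

lemma polyQ_eq_range_assoc_class: "polyQ = range assoc_class"
  unfolding polyQ_def quotient_def assoc_class_def by auto

lemma qmult_assoc_class: "qmult (assoc_class a) (assoc_class b) = assoc_class (a * b)"
proof -
  have "assoc_rel `` {a' * b'} = assoc_class (a * b)"
    if "(a, a') \<in> assoc_rel" and "(b, b') \<in> assoc_rel" for a' b'
    using that unfolding assoc_class_def [symmetric] assoc_class_eq_iff
    by (auto simp: assoc_rel_def mult_dvd_mono)
  moreover have "(a, a) \<in> assoc_rel" and "(b, b) \<in> assoc_rel"
    by (simp_all add: assoc_rel_def)
  ultimately show ?thesis
    unfolding qmult_def assoc_class_def by blast
qed

lemma ideal_gen_assoc_class:
  "sg_ideal_gen polyQ qmult {assoc_class f} = assoc_class ` {x. f dvd x}"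
proof
  show "sg_ideal_gen polyQ qmult {assoc_class f} \<subseteq> assoc_class ` {x. f dvd x}"
    unfolding sg_ideal_gen_def polyQ_eq_range_assoc_class
    by (auto simp: qmult_assoc_class intro!: imageI)
  show "assoc_class ` {x. f dvd x} \<subseteq> sg_ideal_gen polyQ qmult {assoc_class f}"
  proof
    fix X assume "X \<in> assoc_class ` {x. f dvd x}"
    then obtain h where "X = assoc_class (h * f)"
      by (metis dvd_def imageE mem_Collect_eq mult.commute)
    then have "X = qmult (assoc_class h) (assoc_class f)"
      by (simp add: qmult_assoc_class)
    then show "X \<in> sg_ideal_gen polyQ qmult {assoc_class f}"
      unfolding sg_ideal_gen_def polyQ_eq_range_assoc_class by blast
  qed
qed

lemma assoc_class_in_ideal_gen_iff:
  "assoc_class x \<in> sg_ideal_gen polyQ qmult {assoc_class f} \<longleftrightarrow> f dvd x"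
  unfolding ideal_gen_assoc_class by (auto simp: assoc_class_eq_iff intro: dvd_trans)

lemma two_sided_mult_iff_one_sided:
  fixes a b :: "'a::comm_monoid_mult"
  shows "(\<forall>u v. P (u * a * v) \<longleftrightarrow> P (u * b * v)) \<longleftrightarrow> (\<forall>w. P (w * a) \<longleftrightarrow> P (w * b))"
proof
  assume "\<forall>u v. P (u * a * v) \<longleftrightarrow> P (u * b * v)"
  then show "\<forall>w. P (w * a) \<longleftrightarrow> P (w * b)"
    by (metis mult_1_right)
next
  assume eq: "\<forall>w. P (w * a) \<longleftrightarrow> P (w * b)"
  show "\<forall>u v. P (u * a * v) \<longleftrightarrow> P (u * b * v)"
  proof (intro allI)
    fix u v
    show "P (u * a * v) \<longleftrightarrow> P (u * b * v)"
      using eq [rule_format, of "u * v"] by (simp add: ac_simps)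
  qed
qed

lemma assoc_class_pair_in_residual_iff:
  "(assoc_class u, assoc_class v)
     \<in> sg_residual polyQ qmult (sg_ideal_gen polyQ qmult {assoc_class f}) (assoc_class a)
   \<longleftrightarrow> f dvd u * a * v"
proof -
  have "assoc_class x \<in> polyQ" for x :: "'a poly"
    by (simp add: polyQ_eq_range_assoc_class)
  then show ?thesis
    unfolding sg_residual_def by (simp add: qmult_assoc_class assoc_class_in_ideal_gen_iff)
qed

lemma residual_ideal_gen_eq_iff:
  fixes f :: "'a::field poly"
  defines "r \<equiv> sg_residual polyQ qmult (sg_ideal_gen polyQ qmult {assoc_class f})"
  shows "r (assoc_class a) = r (assoc_class b) \<longleftrightarrow> {w. f dvd w * a} = {w. f dvd w * b}"
proof -
  note mem = assoc_class_pair_in_residual_iff [of _ _ f, folded r_def]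
  have "r (assoc_class a) = r (assoc_class b) \<longleftrightarrow> (\<forall>u v. f dvd u * a * v \<longleftrightarrow> f dvd u * b * v)"
  proof
    assume eq: "\<forall>u v. f dvd u * a * v \<longleftrightarrow> f dvd u * b * v"
    have "p \<in> r (assoc_class a) \<longleftrightarrow> p \<in> r (assoc_class b)" for p
    proof (cases "p \<in> polyQ \<times> polyQ")
      case True
      then obtain u v where "p = (assoc_class u, assoc_class v)"
        unfolding polyQ_eq_range_assoc_class by blast
      then show ?thesis
        using eq mem by simp
    next
      case False
      then show ?thesis
        unfolding r_def sg_residual_def by blast
    qed
    then show "r (assoc_class a) = r (assoc_class b)"
      by blast
  qed (use mem in blast)
  also have "\<dots> \<longleftrightarrow> (\<forall>w. f dvd w * a \<longleftrightarrow> f dvd w * b)"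
    by (rule two_sided_mult_iff_one_sided)
  finally show ?thesis
    by blast
qed

theorem theorem5:
  fixes f :: "'a::field poly"
  assumes "f \<noteq> 0"
  shows "num_divisors f =
    card (polyQ // sg_P polyQ qmult (sg_ideal_gen polyQ qmult {assoc_rel `` {f}}))"
proof -
  define r where "r = sg_residual polyQ qmult (sg_ideal_gen polyQ qmult {assoc_class f})"
  have "card (polyQ // sg_P polyQ qmult (sg_ideal_gen polyQ qmult {assoc_class f}))
      = card (r ` polyQ)"
    by (rule card_quotient_eq_card_image) (auto simp: sg_P_def r_def)
  also have "r ` polyQ = (\<lambda>a. r (assoc_class a)) ` UNIV"
    by (simp add: polyQ_eq_range_assoc_class image_image)
  also have "card \<dots> = card ((\<lambda>a. {w. f dvd w * a}) ` UNIV)"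
    by (rule card_image_eq_card_image) (simp add: r_def residual_ideal_gen_eq_iff)
  also have "\<dots> = card ((\<lambda>g. {w. g dvd w}) ` {g. g dvd f})"
    using colon_ideals_eq_divisor_multiples [OF assms] by simp
  also have "\<dots> = num_divisors f"
    unfolding num_divisors_def
    by (rule card_quotient_eq_card_image [symmetric])
      (auto simp: assoc_rel_def multiples_eq_iff intro: dvd_trans)
  finally show ?thesis
    by (simp add: assoc_class_def)
qed

end
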